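(* If a configuration $(\mu,s)$ is stable under no observability for the objective game $G$, then its aggregate outcome $x(\mu,s)$ is a Nash equilibrium of $G$.
   Context: Objective game: $G=(N,A,\pi)$ is a finite $n$-player normal-form game, $N=\{1,\dots,n\}$, finite action sets $A_i$, $A=\prod_iA_i$, fitness functions $\pi_i:A\to\mathbb{R}$ extended multilinearly to $\prod_i\Delta(A_i)$. Preference types: $\Theta=\mathbb{R}^A$ (extended multilinearly). $\mathcal{M}(\Theta^n)$: product distributions $\mu=\mu_1\times\dots\times\mu_n$ on $\Theta^n$ with finitely supported marginals; $\operatorname{supp}\mu=\prod_i\operatorname{supp}\mu_i$, $\mu_{-i}(\theta_{-i})=\prod_{j\neq i}\mu_j(\theta_j)$. Mutants: for nonempty $J\subseteq N$, a mutant sub-profile is $\tilde\theta_J\in\prod_{j\in J}(\Theta\setminus\operatorname{supp}\mu_j)$ with shares $\varepsilon\in(0,1)^{|J|}$, $\|\varepsilon\|=\max_j\varepsilon_j$; post-entry $\tilde\mu^\varepsilon_i=(1-\varepsilon_i)\mu_i+\varepsilon_i\delta_{\tilde\theta_i}$ for $i\in J$, $\tilde\mu^\varepsilon_i=\mu_i$ otherwise. No observability: a strategy of player $i$ is $s_i:\operatorname{supp}\mu_i\to\Delta(A_i)$, $s(\theta)=(s_1(\theta_1),\dots,s_n(\theta_n))$; $s$ is a Bayesian–Nash equilibrium if for each $i$ and $\theta_i\in\operatorname{supp}\mu_i$, $s_i(\theta_i)\in\arg\max_{\sigma_i\in\Delta(A_i)}\sum_{\theta'_{-i}\in\operatorname{supp}\mu_{-i}}\mu_{-i}(\theta'_{-i})\theta_i(\sigma_i,s_{-i}(\theta'_{-i}))$;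 $B_0(\mu)$ is the set of these; $(\mu,s)$ with $s\in B_0(\mu)$ is a configuration, with aggregate outcome $x(\mu,s)=\big(\sum_{\theta_i}\mu_i(\theta_i)s_i(\theta_i)\big)_{i}$. Average fitness: $\Pi_{\theta_i}(\mu;s)=\pi_i(s_i(\theta_i),x(\mu,s)_{-i})$. Balanced: all types in each $\operatorname{supp}\mu_i$ have equal average fitness. Nearby set: for $\eta\ge0$, $B_0^\eta(\tilde\mu^\varepsilon;s)=\{\tilde s\in B_0(\tilde\mu^\varepsilon):\max_{i}\|\tilde s_i(\theta_i)-s_i(\theta_i)\|\le\eta\ \forall\theta\in\operatorname{supp}\mu\}$ (Euclidean norm). $(\mu,s)$ is stable if it is balanced and for every nonempty $J\subseteq N$, every $\tilde\theta_J$ and every $\eta>0$ there exist $\bar\eta\in[0,\eta)$ and $\bar\epsilon\in(0,1)$ such that for every $\varepsilon$ with $\|\varepsilon\|\in(0,\bar\epsilon)$, $B_0^{\bar\eta}(\tilde\mu^\varepsilon;s)\neq\emptyset$ and every $\tilde s\in B_0^{\bar\eta}(\tilde\mu^\varepsilon;s)$ satisfies either (i) some $j\in J$ has $\Pi_{\theta_j}(\tilde\mu^\varepsilon;\tilde s)>\Pi_{\tilde\theta_j}(\tilde\mu^\varepsilon;\tilde s)$ for all $\theta_j\in\operatorname{supp}\mu_j$, or (ii) for every $i$ all types in $\operatorname{supp}\tilde\mu^\varepsilon_i$ have equal average fitness under $(\tilde\mu^\varepsilon,\tilde s)$. *)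

theory Defs
  imports Complex_Main "HOL-Library.FuncSet"
begin

text \<open>Pure profiles are functions 'i => 'a; a preference type (element of R^A) is a real
  function on pure profiles that vanishes outside Pi A (so that Theta is exactly R^A).\<close>

type_synonym ('i, 'a) pref = "('i \<Rightarrow> 'a) \<Rightarrow> real"

definition simplex :: "'a set \<Rightarrow> ('a \<Rightarrow> real) set" where
  "simplex S = {\<sigma>. (\<forall>a. 0 \<le> \<sigma> a) \<and> (\<forall>a. a \<notin> S \<longrightarrow> \<sigma> a = 0) \<and> sum \<sigma> S = 1}"

definition mlin :: "('i::finite \<Rightarrow> 'a set) \<Rightarrow> ('i, 'a) pref \<Rightarrow> ('i \<Rightarrow> 'a \<Rightarrow> real) \<Rightarrow> real" where
  "mlin A u \<sigma> = (\<Sum>a\<in>Pi\<^sub>E UNIV A. (\<Prod>i\<in>UNIV. \<sigma> i (a i)) * u a)"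

definition Theta :: "('i \<Rightarrow> 'a set) \<Rightarrow> ('i, 'a) pref set" where
  "Theta A = {\<theta>. \<forall>a. a \<notin> Pi\<^sub>E UNIV A \<longrightarrow> \<theta> a = 0}"

definition dsupp :: "('b \<Rightarrow> real) \<Rightarrow> 'b set" where
  "dsupp f = {t. f t \<noteq> 0}"

text \<open>mu i is the marginal distribution over types of player i (finitely supported);
  the type distribution is the product of the marginals.\<close>
definition is_dist :: "('i \<Rightarrow> 'a set) \<Rightarrow> ('i \<Rightarrow> ('i, 'a) pref \<Rightarrow> real) \<Rightarrow> bool" where
  "is_dist A \<mu> = (\<forall>i. finite (dsupp (\<mu> i)) \<and> dsupp (\<mu> i) \<subseteq> Theta A \<and>
      (\<forall>t. 0 \<le> \<mu> i t) \<and> sum (\<mu> i) (dsupp (\<mu> i)) = 1)"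

text \<open>Expected subjective payoff of type theta of player i playing sigma against s
  (no observability).\<close>
definition exp_payoff :: "('i::finite \<Rightarrow> 'a set) \<Rightarrow> ('i \<Rightarrow> ('i, 'a) pref \<Rightarrow> real)
    \<Rightarrow> ('i \<Rightarrow> ('i, 'a) pref \<Rightarrow> 'a \<Rightarrow> real) \<Rightarrow> 'i \<Rightarrow> ('i, 'a) pref \<Rightarrow> ('a \<Rightarrow> real) \<Rightarrow> real" where
  "exp_payoff A \<mu> s i \<theta> \<sigma> =
     (\<Sum>\<theta>'\<in>Pi\<^sub>E (UNIV - {i}) (\<lambda>j. dsupp (\<mu> j)).
        (\<Prod>j\<in>UNIV - {i}. \<mu> j (\<theta>' j)) * mlin A \<theta> (\<lambda>j. if j = i then \<sigma> else s j (\<theta>' j)))"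

definition BNE :: "('i::finite \<Rightarrow> 'a set) \<Rightarrow> ('i \<Rightarrow> ('i, 'a) pref \<Rightarrow> real)
    \<Rightarrow> ('i \<Rightarrow> ('i, 'a) pref \<Rightarrow> 'a \<Rightarrow> real) \<Rightarrow> bool" where
  "BNE A \<mu> s = (\<forall>i. \<forall>\<theta>\<in>dsupp (\<mu> i). s i \<theta> \<in> simplex (A i) \<and>
      (\<forall>\<sigma>\<in>simplex (A i). exp_payoff A \<mu> s i \<theta> \<sigma> \<le> exp_payoff A \<mu> s i \<theta> (s i \<theta>)))"

definition agg :: "('i \<Rightarrow> ('i, 'a) pref \<Rightarrow> real) \<Rightarrow> ('i \<Rightarrow> ('i, 'a) pref \<Rightarrow> 'a \<Rightarrow> real) \<Rightarrow> 'i \<Rightarrow> 'a \<Rightarrow> real" where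
  "agg \<mu> s i = (\<lambda>a. \<Sum>\<theta>\<in>dsupp (\<mu> i). \<mu> i \<theta> * s i \<theta> a)"

definition avg_fit :: "('i::finite \<Rightarrow> 'a set) \<Rightarrow> ('i \<Rightarrow> ('i, 'a) pref) \<Rightarrow> ('i \<Rightarrow> ('i, 'a) pref \<Rightarrow> real)
    \<Rightarrow> ('i \<Rightarrow> ('i, 'a) pref \<Rightarrow> 'a \<Rightarrow> real) \<Rightarrow> 'i \<Rightarrow> ('i, 'a) pref \<Rightarrow> real" where
  "avg_fit A \<pi> \<mu> s i \<theta> = mlin A (\<pi> i) (\<lambda>j. if j = i then s i \<theta> else agg \<mu> s j)"

definition balanced :: "('i::finite \<Rightarrow> 'a set) \<Rightarrow> ('i \<Rightarrow> ('i, 'a) pref) \<Rightarrow> ('i \<Rightarrow> ('i, 'a) pref \<Rightarrow> real)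
    \<Rightarrow> ('i \<Rightarrow> ('i, 'a) pref \<Rightarrow> 'a \<Rightarrow> real) \<Rightarrow> bool" where
  "balanced A \<pi> \<mu> s = (\<forall>i. \<forall>\<theta>\<in>dsupp (\<mu> i). \<forall>\<theta>'\<in>dsupp (\<mu> i).
      avg_fit A \<pi> \<mu> s i \<theta> = avg_fit A \<pi> \<mu> s i \<theta>')"

definition post_entry :: "('i \<Rightarrow> ('i, 'a) pref \<Rightarrow> real) \<Rightarrow> 'i set \<Rightarrow> ('i \<Rightarrow> ('i, 'a) pref)
    \<Rightarrow> ('i \<Rightarrow> real) \<Rightarrow> 'i \<Rightarrow> ('i, 'a) pref \<Rightarrow> real" where
  "post_entry \<mu> J m \<epsilon> i = (if i \<in> J
      then (\<lambda>t. (1 - \<epsilon> i) * \<mu> i t + \<epsilon> i * (if t = m i then 1 else 0)) else \<mu> i)"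

definition mdist :: "('i \<Rightarrow> 'a set) \<Rightarrow> 'i \<Rightarrow> ('a \<Rightarrow> real) \<Rightarrow> ('a \<Rightarrow> real) \<Rightarrow> real" where
  "mdist A i \<sigma> \<tau> = sqrt (\<Sum>a\<in>A i. (\<sigma> a - \<tau> a)\<^sup>2)"

definition nearby :: "('i::finite \<Rightarrow> 'a set) \<Rightarrow> ('i \<Rightarrow> ('i, 'a) pref \<Rightarrow> real) \<Rightarrow> ('i \<Rightarrow> ('i, 'a) pref \<Rightarrow> real)
    \<Rightarrow> ('i \<Rightarrow> ('i, 'a) pref \<Rightarrow> 'a \<Rightarrow> real) \<Rightarrow> real \<Rightarrow> ('i \<Rightarrow> ('i, 'a) pref \<Rightarrow> 'a \<Rightarrow> real) set" where
  "nearby A \<mu>' \<mu> s \<eta> = {s'. BNE A \<mu>' s' \<and>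
      (\<forall>\<theta>\<in>Pi\<^sub>E UNIV (\<lambda>i. dsupp (\<mu> i)). (MAX i. mdist A i (s' i (\<theta> i)) (s i (\<theta> i))) \<le> \<eta>)}"

definition stable_config :: "('i::finite \<Rightarrow> 'a set) \<Rightarrow> ('i \<Rightarrow> ('i, 'a) pref) \<Rightarrow> ('i \<Rightarrow> ('i, 'a) pref \<Rightarrow> real)
    \<Rightarrow> ('i \<Rightarrow> ('i, 'a) pref \<Rightarrow> 'a \<Rightarrow> real) \<Rightarrow> bool" where
  "stable_config A \<pi> \<mu> s = (balanced A \<pi> \<mu> s \<and>
     (\<forall>J m. J \<noteq> {} \<and> (\<forall>j\<in>J. m j \<in> Theta A \<and> m j \<notin> dsupp (\<mu> j)) \<longrightarrow>
       (\<forall>\<eta>>0. \<exists>\<eta>b \<epsilon>b. 0 \<le> \<eta>b \<and> \<eta>b < \<eta> \<and> 0 < \<epsilon>b \<and> \<epsilon>b < 1 \<and>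
         (\<forall>\<epsilon>. (\<forall>j\<in>J. 0 < \<epsilon> j \<and> \<epsilon> j < 1) \<and> Max (\<epsilon> ` J) < \<epsilon>b \<longrightarrow>
            nearby A (post_entry \<mu> J m \<epsilon>) \<mu> s \<eta>b \<noteq> {} \<and>
            (\<forall>s'\<in>nearby A (post_entry \<mu> J m \<epsilon>) \<mu> s \<eta>b.
               (\<exists>j\<in>J. \<forall>\<theta>\<in>dsupp (\<mu> j).
                  avg_fit A \<pi> (post_entry \<mu> J m \<epsilon>) s' j \<theta> > avg_fit A \<pi> (post_entry \<mu> J m \<epsilon>) s' j (m j))
               \<or> balanced A \<pi> (post_entry \<mu> J m \<epsilon>) s')))))"

definition nash :: "('i::finite \<Rightarrow> 'a set) \<Rightarrow> ('i \<Rightarrow> ('i, 'a) pref) \<Rightarrow> ('i \<Rightarrow> 'a \<Rightarrow> real) \<Rightarrow> bool" where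
  "nash A \<pi> x = ((\<forall>i. x i \<in> simplex (A i)) \<and>
     (\<forall>i. \<forall>\<sigma>\<in>simplex (A i). mlin A (\<pi> i) (\<lambda>j. if j = i then \<sigma> else x j) \<le> mlin A (\<pi> i) x))"

end

theory Submission
  imports Defs
begin

text \<open>Suppose player i had a deviation \<sigma> against the aggregate outcome that is better in fitness.
  Let a mutant whose preferences are a positive multiple of player i's fitness enter the i-th
  population. In every post-entry equilibrium the mutant best-replies in fitness terms, so its
  fitness is at least that of \<sigma>; stability forces every incumbent to do at least as well as the
  mutant, and averaging over the incumbents shows that the aggregate strategy of population i
  does at least as well as \<sigma>. Since post-entry equilibria can be chosen arbitrarily close to
  the original one, this inequality passes to the limit.\<close>

lemma mlin_slot_expand:
  fixes A :: "'i::finite \<Rightarrow> 'a set"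
  shows "mlin A u (\<lambda>j. if j = i then \<sigma> else y j)
    = (\<Sum>b\<in>Pi\<^sub>E UNIV A. \<sigma> (b i) * (\<Prod>k\<in>UNIV - {i}. y k (b k)) * u b)"
  unfolding mlin_def
  by (intro sum.cong refl) (simp add: prod.remove[of UNIV i])

lemma mlin_slot_sum:
  fixes A :: "'i::finite \<Rightarrow> 'a set"
  shows "mlin A u (\<lambda>j. if j = i then (\<lambda>a. \<Sum>\<theta>\<in>S. w \<theta> * f \<theta> a) else y j)
    = (\<Sum>\<theta>\<in>S. w \<theta> * mlin A u (\<lambda>j. if j = i then f \<theta> else y j))"
  unfolding mlin_slot_expand
  by (simp add: sum_distrib_left sum_distrib_right mult_ac sum.swap[of _ S])

lemma exp_payoff_eq_mlin_agg:
  fixes A :: "'i::finite \<Rightarrow> 'a set"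
  assumes "\<And>j. finite (dsupp (\<nu> j))"
  shows "exp_payoff A \<nu> s i \<theta> \<sigma> = mlin A \<theta> (\<lambda>j. if j = i then \<sigma> else agg \<nu> s j)"
proof -
  let ?P = "Pi\<^sub>E (UNIV - {i}) (\<lambda>j. dsupp (\<nu> j))"
  have "exp_payoff A \<nu> s i \<theta> \<sigma> = (\<Sum>b\<in>Pi\<^sub>E UNIV A. \<sigma> (b i) *
      (\<Sum>\<theta>'\<in>?P. \<Prod>j\<in>UNIV - {i}. \<nu> j (\<theta>' j) * s j (\<theta>' j) (b j)) * \<theta> b)"
    unfolding exp_payoff_def mlin_slot_expand
    by (simp add: sum_distrib_left sum_distrib_right prod.distrib mult_ac sum.swap[of _ ?P])
  also have "\<dots> = mlin A \<theta> (\<lambda>j. if j = i then \<sigma> else agg \<nu> s j)"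
    unfolding mlin_slot_expand agg_def
    by (simp add: prod_sum_PiE assms)
  finally show ?thesis .
qed

lemma mlin_tendsto:
  fixes A :: "'i::finite \<Rightarrow> 'a set"
  assumes "\<And>j a. a \<in> A j \<Longrightarrow> ((\<lambda>n. F n j a) \<longlongrightarrow> G j a) L"
  shows "((\<lambda>n. mlin A u (F n)) \<longlongrightarrow> mlin A u G) L"
  unfolding mlin_def by (intro tendsto_intros assms) (auto simp: PiE_iff)

lemma mlin_scaled_restriction:
  fixes A :: "'i::finite \<Rightarrow> 'a set"
  shows "mlin A (\<lambda>b. if b \<in> Pi\<^sub>E UNIV A then c * u b else 0) y = c * mlin A u y"
  unfolding mlin_def by (simp add: sum_distrib_left mult_ac)

lemma nearby_mono:
  "\<eta> \<le> \<eta>' \<Longrightarrow> nearby A \<nu> \<mu> s \<eta> \<subseteq> nearby A \<nu> \<mu> s \<eta>'"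
  unfolding nearby_def by (fastforce intro: order_trans)

lemma nearby_component_bound:
  fixes A :: "'i::finite \<Rightarrow> 'a set"
  assumes ne: "\<And>j. dsupp (\<mu> j) \<noteq> {}" and fin: "finite (A k)"
    and s': "s' \<in> nearby A \<nu> \<mu> s \<eta>" and \<theta>: "\<theta> \<in> dsupp (\<mu> k)" and a: "a \<in> A k"
  shows "\<bar>s' k \<theta> a - s k \<theta> a\<bar> \<le> \<eta>"
proof -
  define p where "p j = (if j = k then \<theta> else (SOME t. t \<in> dsupp (\<mu> j)))" for j
  have "p k = \<theta>" by (simp add: p_def)
  have "p \<in> Pi\<^sub>E UNIV (\<lambda>j. dsupp (\<mu> j))"
    using \<theta> ne by (auto simp: p_def some_in_eq)
  then have "(MAX j. mdist A j (s' j (p j)) (s j (p j))) \<le> \<eta>"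
    using s' unfolding nearby_def by blast
  moreover have "mdist A k (s' k (p k)) (s k (p k)) \<le> (MAX j. mdist A j (s' j (p j)) (s j (p j)))"
    by (rule Max_ge) auto
  then have "mdist A k (s' k \<theta>) (s k \<theta>) \<le> (MAX j. mdist A j (s' j (p j)) (s j (p j)))"
    by (simp add: \<open>p k = \<theta>\<close>)
  moreover have "(s' k \<theta> a - s k \<theta> a)\<^sup>2 \<le> (\<Sum>b\<in>A k. (s' k \<theta> b - s k \<theta> b)\<^sup>2)"
    using fin a by (intro member_le_sum) auto
  then have "\<bar>s' k \<theta> a - s k \<theta> a\<bar> \<le> mdist A k (s' k \<theta>) (s k \<theta>)"
    unfolding mdist_def using real_sqrt_le_mono by fastforce
  ultimately show ?thesis by linarith
qed

lemma nearby_agg_tendsto: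
  fixes A :: "'i::finite \<Rightarrow> 'a set"
  assumes ne: "\<And>j. dsupp (\<mu> j) \<noteq> {}" and fin: "finite (A k)"
    and S: "\<And>n. S n \<in> nearby A (\<nu> n) \<mu> s (\<delta> n)" and \<delta>: "\<delta> \<longlonglongrightarrow> 0" and a: "a \<in> A k"
  shows "(\<lambda>n. agg \<mu> (S n) k a) \<longlonglongrightarrow> agg \<mu> s k a"
  unfolding agg_def
proof (intro tendsto_intros)
  fix \<theta> assume \<theta>: "\<theta> \<in> dsupp (\<mu> k)"
  have "norm (S n k \<theta> a - s k \<theta> a) \<le> norm (\<delta> n) * 1" for n
    using nearby_component_bound[OF ne fin S \<theta> a] by (simp add: order_trans[OF _ abs_ge_self])
  then have "(\<lambda>n. S n k \<theta> a - s k \<theta> a) \<longlonglongrightarrow> 0"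
    by (intro tendsto_0_le[OF \<delta>] always_eventually allI)
  then show "(\<lambda>n. S n k \<theta> a) \<longlonglongrightarrow> s k \<theta> a"
    by (rule LIM_zero_cancel)
qed

lemma exists_scaled_type_notin:
  fixes A :: "'i::finite \<Rightarrow> 'a set"
  assumes "finite T" and b0: "b0 \<in> Pi\<^sub>E UNIV A" "u b0 \<noteq> 0"
  obtains k :: real where "0 < k" "(\<lambda>b. if b \<in> Pi\<^sub>E UNIV A then k * u b else 0) \<notin> T"
proof -
  define scale where "scale n = (\<lambda>b. if b \<in> Pi\<^sub>E UNIV A then real (Suc n) * u b else 0)" for n
  have "inj scale"
  proof (rule injI)
    fix n n' assume "scale n = scale n'"
    then have "real (Suc n) * u b0 = real (Suc n') * u b0"
      using b0 unfolding scale_def by meson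
    then show "n = n'" using b0 by simp
  qed
  then have "\<not> range scale \<subseteq> T"
    using \<open>finite T\<close> finite_imageD finite_subset by blast
  then obtain n where "scale n \<notin> T" by blast
  then show ?thesis using that[of "real (Suc n)"] by (simp add: scale_def)
qed

lemma post_entry_single_other [simp]: "j \<noteq> i \<Longrightarrow> post_entry \<mu> {i} m \<epsilon> j = \<mu> j"
  by (simp add: post_entry_def)

lemma agg_post_entry_single_other [simp]:
  "j \<noteq> i \<Longrightarrow> agg (post_entry \<mu> {i} m \<epsilon>) s j = agg \<mu> s j"
  by (simp add: agg_def)

lemma dsupp_post_entry_single:
  assumes "m i \<notin> dsupp (\<mu> i)" "0 < \<epsilon> i" "\<epsilon> i < 1"
  shows "dsupp (post_entry \<mu> {i} m \<epsilon> k) = (if k = i then insert (m i) (dsupp (\<mu> i)) else dsupp (\<mu> k))"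
  using assms by (auto simp: dsupp_def post_entry_def)

lemma deviation_le_fitness_after_entry:
  fixes A :: "'i::finite \<Rightarrow> 'a set" and \<mu> :: "'i \<Rightarrow> ('i, 'a) pref \<Rightarrow> real"
    and i :: 'i and m :: "('i, 'a) pref" and e :: real
  defines "\<nu> \<equiv> post_entry \<mu> {i} (\<lambda>_. m) (\<lambda>_. e)"
  assumes dist: "is_dist A \<mu>"
    and m: "m \<notin> dsupp (\<mu> i)" "\<And>y. mlin A m y = k * mlin A (\<pi> i) y" "0 < k"
    and e: "0 < e" "e < 1"
    and bne: "BNE A \<nu> s'"
    and outcome: "(\<exists>j\<in>{i}. \<forall>\<theta>\<in>dsupp (\<mu> j). avg_fit A \<pi> \<nu> s' j \<theta> > avg_fit A \<pi> \<nu> s' j m)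
      \<or> balanced A \<pi> \<nu> s'"
    and \<sigma>: "\<sigma> \<in> simplex (A i)"
  shows "mlin A (\<pi> i) (\<lambda>j. if j = i then \<sigma> else agg \<mu> s' j) \<le> mlin A (\<pi> i) (agg \<mu> s')"
proof -
  define F where "F \<theta> = mlin A (\<pi> i) (\<lambda>j. if j = i then s' i \<theta> else agg \<mu> s' j)" for \<theta>
  have fin: "finite (dsupp (\<mu> j))" and nonneg: "0 \<le> \<mu> i \<theta>"
    and total: "sum (\<mu> i) (dsupp (\<mu> i)) = 1" for j \<theta>
    using dist unfolding is_dist_def by auto
  have supp_\<nu>: "dsupp (\<nu> j) = (if j = i then insert m (dsupp (\<mu> i)) else dsupp (\<mu> j))" for j
    unfolding \<nu>_def using dsupp_post_entry_single[of "\<lambda>_. m"] m e by simp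
  have slots: "(\<lambda>j. if j = i then \<tau> else agg \<nu> s' j) = (\<lambda>j. if j = i then \<tau> else agg \<mu> s' j)" for \<tau>
    unfolding \<nu>_def by auto
  have fit: "avg_fit A \<pi> \<nu> s' i \<theta> = F \<theta>" for \<theta>
    unfolding avg_fit_def F_def slots ..
  have payoff_m: "exp_payoff A \<nu> s' i m \<tau> = k * mlin A (\<pi> i) (\<lambda>j. if j = i then \<tau> else agg \<mu> s' j)" for \<tau>
    using fin by (simp add: exp_payoff_eq_mlin_agg supp_\<nu> slots m(2))
  have "exp_payoff A \<nu> s' i m \<sigma> \<le> exp_payoff A \<nu> s' i m (s' i m)"
    using bne \<sigma> supp_\<nu> unfolding BNE_def by auto
  then have "k * mlin A (\<pi> i) (\<lambda>j. if j = i then \<sigma> else agg \<mu> s' j) \<le> k * F m"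
    unfolding payoff_m F_def .
  then have dev: "mlin A (\<pi> i) (\<lambda>j. if j = i then \<sigma> else agg \<mu> s' j) \<le> F m"
    using m(3) by simp
  have "F m \<le> F \<theta>" if \<theta>: "\<theta> \<in> dsupp (\<mu> i)" for \<theta>
    using outcome
  proof
    assume "\<exists>j\<in>{i}. \<forall>\<theta>\<in>dsupp (\<mu> j). avg_fit A \<pi> \<nu> s' j \<theta> > avg_fit A \<pi> \<nu> s' j m"
    then show ?thesis using \<theta> by (auto simp: fit)
  next
    assume "balanced A \<pi> \<nu> s'"
    then have "avg_fit A \<pi> \<nu> s' i m = avg_fit A \<pi> \<nu> s' i \<theta>"
      using \<theta> supp_\<nu> unfolding balanced_def by simp
    then show ?thesis by (simp add: fit)
  qed
  then have "(\<Sum>\<theta>\<in>dsupp (\<mu> i). \<mu> i \<theta> * F m) \<le> (\<Sum>\<theta>\<in>dsupp (\<mu> i). \<mu> i \<theta> * F \<theta>)"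
    by (intro sum_mono mult_left_mono nonneg)
  also have "\<dots> = mlin A (\<pi> i) (\<lambda>j. if j = i then agg \<mu> s' i else agg \<mu> s' j)"
    unfolding F_def agg_def[of \<mu> s' i] mlin_slot_sum ..
  also have "\<dots> = mlin A (\<pi> i) (agg \<mu> s')"
    by (rule arg_cong[where f = "mlin A (\<pi> i)"]) auto
  finally show ?thesis
    using dev total by (simp add: sum_distrib_right[symmetric])
qed

lemma stable_config_single_entry:
  assumes "stable_config A \<pi> \<mu> s" "m \<in> Theta A" "m \<notin> dsupp (\<mu> i)" "0 < \<eta>"
  obtains e s' where "0 < e" "e < 1"
    "s' \<in> nearby A (post_entry \<mu> {i} (\<lambda>_. m) (\<lambda>_. e)) \<mu> s \<eta>"
    "(\<exists>j\<in>{i}. \<forall>\<theta>\<in>dsupp (\<mu> j). avg_fit A \<pi> (post_entry \<mu> {i} (\<lambda>_. m) (\<lambda>_. e)) s' j \<theta>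
        > avg_fit A \<pi> (post_entry \<mu> {i} (\<lambda>_. m) (\<lambda>_. e)) s' j m)
      \<or> balanced A \<pi> (post_entry \<mu> {i} (\<lambda>_. m) (\<lambda>_. e)) s'"
proof -
  obtain \<eta>b \<epsilon>b where \<eta>b: "\<eta>b < \<eta>" and \<epsilon>b: "0 < \<epsilon>b" "\<epsilon>b < 1"
    and entry: "\<And>\<epsilon>. (\<forall>j\<in>{i}. 0 < \<epsilon> j \<and> \<epsilon> j < 1) \<and> Max (\<epsilon> ` {i}) < \<epsilon>b \<Longrightarrow>
      nearby A (post_entry \<mu> {i} (\<lambda>_. m) \<epsilon>) \<mu> s \<eta>b \<noteq> {} \<and>
      (\<forall>s'\<in>nearby A (post_entry \<mu> {i} (\<lambda>_. m) \<epsilon>) \<mu> s \<eta>b.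
         (\<exists>j\<in>{i}. \<forall>\<theta>\<in>dsupp (\<mu> j). avg_fit A \<pi> (post_entry \<mu> {i} (\<lambda>_. m) \<epsilon>) s' j \<theta>
            > avg_fit A \<pi> (post_entry \<mu> {i} (\<lambda>_. m) \<epsilon>) s' j m)
         \<or> balanced A \<pi> (post_entry \<mu> {i} (\<lambda>_. m) \<epsilon>) s')"
    using assms(1)[unfolded stable_config_def, THEN conjunct2, rule_format, of "{i}" "\<lambda>_. m" \<eta>]
      assms(2-4) by auto
  have "(\<forall>j\<in>{i}. 0 < \<epsilon>b / 2 \<and> \<epsilon>b / 2 < 1) \<and> Max ((\<lambda>_. \<epsilon>b / 2) ` {i}) < \<epsilon>b"
    using \<epsilon>b by simp
  note entry_half = entry[OF this]
  then obtain s' where s': "s' \<in> nearby A (post_entry \<mu> {i} (\<lambda>_. m) (\<lambda>_. \<epsilon>b / 2)) \<mu> s \<eta>b"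
    by blast
  show ?thesis
  proof (rule that)
    show "s' \<in> nearby A (post_entry \<mu> {i} (\<lambda>_. m) (\<lambda>_. \<epsilon>b / 2)) \<mu> s \<eta>"
      using nearby_mono \<eta>b s' by (meson less_imp_le subsetD)
  qed (use \<epsilon>b entry_half s' in auto)
qed

lemma deviation_le_of_nearby_deviation_le:
  fixes A :: "'i::finite \<Rightarrow> 'a set"
  assumes fin: "\<And>j. finite (A j)" and ne: "\<And>j. dsupp (\<mu> j) \<noteq> {}"
    and near: "\<And>\<eta>. 0 < \<eta> \<Longrightarrow> \<exists>\<nu> s'. s' \<in> nearby A \<nu> \<mu> s \<eta> \<and>
      mlin A u (\<lambda>j. if j = i then \<sigma> else agg \<mu> s' j) \<le> mlin A u (agg \<mu> s')"
  shows "mlin A u (\<lambda>j. if j = i then \<sigma> else agg \<mu> s j) \<le> mlin A u (agg \<mu> s)"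
proof -
  have "\<forall>n. \<exists>\<nu> s'. s' \<in> nearby A \<nu> \<mu> s (inverse (real (Suc n))) \<and>
      mlin A u (\<lambda>j. if j = i then \<sigma> else agg \<mu> s' j) \<le> mlin A u (agg \<mu> s')"
    using near by simp
  then obtain \<nu> S where S: "\<And>n. S n \<in> nearby A (\<nu> n) \<mu> s (inverse (real (Suc n)))"
    and le: "\<And>n. mlin A u (\<lambda>j. if j = i then \<sigma> else agg \<mu> (S n) j) \<le> mlin A u (agg \<mu> (S n))"
    by metis
  have agg: "(\<lambda>n. agg \<mu> (S n) j a) \<longlonglongrightarrow> agg \<mu> s j a" if "a \<in> A j" for j a
    using nearby_agg_tendsto[OF ne fin S LIMSEQ_inverse_real_of_nat that] .
  have "(\<lambda>n. mlin A u (\<lambda>j. if j = i then \<sigma> else agg \<mu> (S n) j))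
      \<longlonglongrightarrow> mlin A u (\<lambda>j. if j = i then \<sigma> else agg \<mu> s j)"
    by (intro mlin_tendsto) (auto intro: agg)
  moreover have "(\<lambda>n. mlin A u (agg \<mu> (S n))) \<longlonglongrightarrow> mlin A u (agg \<mu> s)"
    by (intro mlin_tendsto agg)
  ultimately show ?thesis
    by (rule LIMSEQ_le) (use le in blast)
qed

lemma agg_in_simplex:
  assumes "is_dist A \<mu>" "BNE A \<mu> s"
  shows "agg \<mu> s i \<in> simplex (A i)"
proof -
  have nonneg: "0 \<le> \<mu> i \<theta>" and total: "sum (\<mu> i) (dsupp (\<mu> i)) = 1" for \<theta>
    using assms(1) unfolding is_dist_def by auto
  have s: "s i \<theta> \<in> simplex (A i)" if "\<theta> \<in> dsupp (\<mu> i)" for \<theta>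
    using assms(2) that unfolding BNE_def by blast
  have "(\<Sum>a\<in>A i. agg \<mu> s i a) = (\<Sum>\<theta>\<in>dsupp (\<mu> i). \<mu> i \<theta> * (\<Sum>a\<in>A i. s i \<theta> a))"
    unfolding agg_def by (subst sum.swap) (simp add: sum_distrib_left)
  also have "\<dots> = 1"
    using s total by (simp add: simplex_def)
  moreover have "0 \<le> agg \<mu> s i a" for a
    unfolding agg_def using s nonneg by (intro sum_nonneg mult_nonneg_nonneg) (auto simp: simplex_def)
  moreover have "agg \<mu> s i a = 0" if "a \<notin> A i" for a
    unfolding agg_def using s that by (intro sum.neutral) (auto simp: simplex_def)
  ultimately show ?thesis unfolding simplex_def by auto
qed

lemma stable_config_no_profitable_deviation:
  fixes A :: "'i::finite \<Rightarrow> 'a set"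
  assumes fin: "\<And>j. finite (A j)" and dist: "is_dist A \<mu>" and stable: "stable_config A \<pi> \<mu> s"
    and \<sigma>: "\<sigma> \<in> simplex (A i)"
  shows "mlin A (\<pi> i) (\<lambda>j. if j = i then \<sigma> else agg \<mu> s j) \<le> mlin A (\<pi> i) (agg \<mu> s)"
proof (cases "\<exists>b\<in>Pi\<^sub>E UNIV A. \<pi> i b \<noteq> 0")
  case False
  then have "mlin A (\<pi> i) y = 0" for y
    by (simp add: mlin_def)
  then show ?thesis by simp
next
  case True
  have fin_supp: "finite (dsupp (\<mu> j))" and total: "sum (\<mu> j) (dsupp (\<mu> j)) = 1" for j
    using dist unfolding is_dist_def by blast+
  have ne_supp: "dsupp (\<mu> j) \<noteq> {}" for j
    using total[of j] by auto
  from True obtain b0 where "b0 \<in> Pi\<^sub>E UNIV A" "\<pi> i b0 \<noteq> 0" by blast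
  then obtain k where k: "0 < k" and fresh: "(\<lambda>b. if b \<in> Pi\<^sub>E UNIV A then k * \<pi> i b else 0) \<notin> dsupp (\<mu> i)"
    by (rule exists_scaled_type_notin[OF fin_supp])
  \<comment> \<open>rescaling keeps the mutant's best replies and makes it a type absent from the population\<close>
  define m where "m = (\<lambda>b. if b \<in> Pi\<^sub>E UNIV A then k * \<pi> i b else 0)"
  have "m \<in> Theta A"
    by (simp add: Theta_def m_def)
  have m_mlin: "mlin A m y = k * mlin A (\<pi> i) y" for y
    unfolding m_def by (rule mlin_scaled_restriction)
  show ?thesis
  proof (rule deviation_le_of_nearby_deviation_le[OF fin ne_supp])
    fix \<eta> :: real assume "0 < \<eta>"
    with stable \<open>m \<in> Theta A\<close> fresh obtain e s'
      where e: "0 < e" "e < 1" and s': "s' \<in> nearby A (post_entry \<mu> {i} (\<lambda>_. m) (\<lambda>_. e)) \<mu> s \<eta>"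
      and outcome: "(\<exists>j\<in>{i}. \<forall>\<theta>\<in>dsupp (\<mu> j). avg_fit A \<pi> (post_entry \<mu> {i} (\<lambda>_. m) (\<lambda>_. e)) s' j \<theta>
          > avg_fit A \<pi> (post_entry \<mu> {i} (\<lambda>_. m) (\<lambda>_. e)) s' j m)
        \<or> balanced A \<pi> (post_entry \<mu> {i} (\<lambda>_. m) (\<lambda>_. e)) s'"
      unfolding m_def by (rule stable_config_single_entry)
    moreover have "BNE A (post_entry \<mu> {i} (\<lambda>_. m) (\<lambda>_. e)) s'"
      using s' by (simp add: nearby_def)
    ultimately show "\<exists>\<nu> s'. s' \<in> nearby A \<nu> \<mu> s \<eta> \<and>
        mlin A (\<pi> i) (\<lambda>j. if j = i then \<sigma> else agg \<mu> s' j) \<le> mlin A (\<pi> i) (agg \<mu> s')"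
      using deviation_le_fitness_after_entry[where \<pi> = \<pi> and i = i, OF dist fresh[folded m_def] m_mlin k e]
        \<sigma> by blast
  qed
qed

theorem mainTheorem10:
  fixes A :: "'i::finite \<Rightarrow> 'a set"
    and \<pi> :: "'i \<Rightarrow> ('i, 'a) pref"
    and \<mu> :: "'i \<Rightarrow> ('i, 'a) pref \<Rightarrow> real"
    and s :: "'i \<Rightarrow> ('i, 'a) pref \<Rightarrow> 'a \<Rightarrow> real"
  assumes "\<And>i. finite (A i)"
    and "\<And>i. A i \<noteq> {}"
    and "is_dist A \<mu>"
    and "BNE A \<mu> s"
    and "stable_config A \<pi> \<mu> s"
  shows "nash A \<pi> (agg \<mu> s)"
  unfolding nash_def
  using agg_in_simplex[OF assms(3,4)] stable_config_no_profitable_deviation[OF assms(1,3,5)] by blast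

end
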